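(* Let $n\ge 1$, let $\mathbf{A}\in\mathbb{R}^{n\times n}$ be symmetric positive semidefinite, $\mathbf{b}\in\mathbb{R}^n$, and let $h(\mathbf{x})=\sum_{i=1}^n\varphi(\mathbf{x}_i)$, where $\varphi:\mathbb{R}\to\mathbb{R}\cup\{+\infty\}$ is proper, lower semicontinuous and convex. Put $f(\mathbf{x})=\tfrac12\mathbf{x}^T\mathbf{A}\mathbf{x}+\mathbf{x}^T\mathbf{b}+h(\mathbf{x})$, and let $\mathbf{x}^*$ be a minimizer of $f$. Write $\mathbf{A}=\mathbf{L}+\mathbf{D}+\mathbf{L}^T$, where $\mathbf{D}$ is the diagonal part and $\mathbf{L}$ the strictly lower triangular part of $\mathbf{A}$. Fix $\omega\in(0,2)$ and $\theta\ge0$ with $\mathbf{D}_{i,i}+\theta>0$ for all $i$. Set $\mathbf{B}=\mathbf{L}+\tfrac1\omega(\mathbf{D}+\theta\mathbf{I})$ and $\mathbf{C}=\mathbf{L}^T+\tfrac1\omega((\omega-1)\mathbf{D}-\theta\mathbf{I})$. Let $\mathcal{T}(\mathbf{x})$ be the unique $\mathbf{z}$ with $\mathbf{0}\in\mathbf{B}\mathbf{z}+\mathbf{b}+\mathbf{C}\mathbf{x}+\partial h(\mathbf{z})$. Let $\mathbf{x}\in\mathbb{R}^n$ be a (bounded) point that is not a minimizer of $f$. Then there exists a constant $\eta\in(0,\infty)$ such that $\|\mathbf{x}-\mathbf{x}^*\|\le\eta\,\|\mathbf{x}-\mathcal{T}(\mathbf{x})\|$.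
   Context: $\partial h$ is the convex subdifferential, and $\|\cdot\|$ is the Euclidean norm. $\mathcal{T}$ is well defined because $\mathbf{B}$ is lower triangular with positive diagonal and $h$ is separable. *)

theory Defs
  imports "HOL-Analysis.Analysis" "HOL-Library.Extended_Real" "HOL-Library.Liminf_Limsup"
begin

definition proper_fun :: "('a \<Rightarrow> ereal) \<Rightarrow> bool" where
  "proper_fun g \<longleftrightarrow> (\<forall>x. g x \<noteq> -\<infinity>) \<and> (\<exists>x. g x \<noteq> \<infinity>)"

definition lsc_fun :: "('a::topological_space \<Rightarrow> ereal) \<Rightarrow> bool" where
  "lsc_fun g \<longleftrightarrow> (\<forall>x. g x \<le> Liminf (at x) g)"

definition convex_efun :: "('a::real_vector \<Rightarrow> ereal) \<Rightarrow> bool" where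
  "convex_efun g \<longleftrightarrow>
     (\<forall>x y t. 0 \<le> t \<and> t \<le> 1 \<longrightarrow>
        g ((1 - t) *\<^sub>R x + t *\<^sub>R y) \<le> ereal (1 - t) * g x + ereal t * g y)"

definition subdiff :: "('a::real_inner \<Rightarrow> ereal) \<Rightarrow> 'a \<Rightarrow> 'a set" where
  "subdiff g z = {v. g z \<noteq> \<infinity> \<and> (\<forall>y. g z + ereal (v \<bullet> (y - z)) \<le> g y)}"

definition sep_fun :: "(real \<Rightarrow> ereal) \<Rightarrow> real^'n \<Rightarrow> ereal" where
  "sep_fun phi x = (\<Sum>i\<in>UNIV. phi (x $ i))"

definition qobj :: "real^'n^'n \<Rightarrow> real^'n \<Rightarrow> (real \<Rightarrow> ereal) \<Rightarrow> real^'n \<Rightarrow> ereal" where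
  "qobj A b phi x = ereal ((1/2) * (x \<bullet> (A *v x)) + x \<bullet> b) + sep_fun phi x"

definition is_minimizer :: "('a \<Rightarrow> ereal) \<Rightarrow> 'a \<Rightarrow> bool" where
  "is_minimizer g x \<longleftrightarrow> (\<forall>y. g x \<le> g y)"

definition diag_part :: "real^'n^'n \<Rightarrow> real^'n^'n" where
  "diag_part A = (\<chi> i j. if i = j then A $ i $ j else 0)"

definition strict_lower :: "real^('n::{finite,linorder})^'n::{finite,linorder} \<Rightarrow> real^'n::{finite,linorder}^'n::{finite,linorder}" where
  "strict_lower A = (\<chi> i j. if j < i then A $ i $ j else 0)"

definition Bmat :: "real^('n::{finite,linorder})^'n::{finite,linorder} \<Rightarrow> real \<Rightarrow> real \<Rightarrow> real^'n::{finite,linorder}^'n::{finite,linorder}" where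
  "Bmat A \<omega> \<theta> = strict_lower A + (1/\<omega>) *\<^sub>R (diag_part A + \<theta> *\<^sub>R mat 1)"

definition Cmat :: "real^('n::{finite,linorder})^'n::{finite,linorder} \<Rightarrow> real \<Rightarrow> real \<Rightarrow> real^'n::{finite,linorder}^'n::{finite,linorder}" where
  "Cmat A \<omega> \<theta> = transpose (strict_lower A) + (1/\<omega>) *\<^sub>R ((\<omega> - 1) *\<^sub>R diag_part A - \<theta> *\<^sub>R mat 1)"

definition Top :: "real^('n::{finite,linorder})^'n::{finite,linorder} \<Rightarrow> real^'n::{finite,linorder} \<Rightarrow> (real \<Rightarrow> ereal) \<Rightarrow> real \<Rightarrow> real \<Rightarrow> real^'n::{finite,linorder} \<Rightarrow> real^'n::{finite,linorder}" where
  "Top A b phi \<omega> \<theta> x =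
     (THE z. - (Bmat A \<omega> \<theta> *v z + b + Cmat A \<omega> \<theta> *v x) \<in> subdiff (sep_fun phi) z)"

end

theory Submission
  imports Defs
begin

text \<open>Since \<open>x\<close> is fixed, it suffices to show \<open>T(x) \<noteq> x\<close>.
  The operator \<open>T\<close> is well defined: as \<open>B\<close> is lower triangular and \<open>h\<close> separable, the
  inclusion defining \<open>T(x)\<close> can be solved row by row, each row being the optimality condition of
  a one-dimensional proximal problem for \<open>\<phi>\<close> with positive curvature \<open>(D\<^sub>i\<^sub>i + \<theta>)/\<omega>\<close>
  (solvable since \<open>\<phi>\<close> is lower semicontinuous and has an affine minorant); the solution is unique
  because the subdifferential is monotone and \<open>B\<close> is positive definite for \<open>0 < \<omega> < 2\<close>.
  Finally \<open>B + C = A\<close>, so a fixed point of \<open>T\<close> satisfies \<open>0 \<in> Ax + b + \<partial>h(x)\<close> and is a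
  minimizer of \<open>f\<close>.\<close>

lemma lsc_fun_eventually_greater:
  fixes g :: "'a::topological_space \<Rightarrow> ereal"
  assumes "lsc_fun g" "c < g x"
  shows "eventually (\<lambda>y. c < g y) (nhds x)"
proof -
  have "c < Liminf (at x) g" using assms unfolding lsc_fun_def by (meson less_le_trans)
  then have "eventually (\<lambda>y. c < g y) (at x)" using le_Liminf_iff[of "Liminf (at x) g" "at x" g] by blast
  then show ?thesis using assms(2) by (simp add: eventually_nhds_conv_at)
qed

lemma eventually_greater_add_continuous:
  fixes g :: "'a::t2_space \<Rightarrow> ereal"
  assumes g: "\<And>c. c < g x \<Longrightarrow> eventually (\<lambda>y. c < g y) (nhds x)"
    and q: "isCont q x" and c: "ereal c < ereal (q x) + g x"
  shows "eventually (\<lambda>y. ereal c < ereal (q y) + g y) (nhds x)"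
proof -
  have "ereal (c - q x) < g x" using c by (cases "g x") auto
  then obtain s where s: "c - q x < s" "ereal s < g x" using ereal_dense2 by force
  have "eventually (\<lambda>y. ereal s < g y) (nhds x)" using g s(2) .
  moreover have "eventually (\<lambda>y. c - s < q y) (nhds x)"
    using q s(1) by (simp add: isCont_def order_tendstoD(1) eventually_nhds_conv_at)
  ultimately show ?thesis
  proof eventually_elim
    case (elim y)
    then show ?case by (cases "g y") auto
  qed
qed

lemma lsc_attains_min_on_compact:
  fixes G :: "'a::topological_space \<Rightarrow> ereal"
  assumes G: "\<And>x c. ereal c < G x \<Longrightarrow> eventually (\<lambda>y. ereal c < G y) (nhds x)"
    and K: "compact K" "K \<noteq> {}"
  shows "\<exists>t\<in>K. \<forall>y\<in>K. G t \<le> G y"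
proof (rule ccontr)
  define m where "m = (INF y\<in>K. G y)"
  assume "\<not> ?thesis"
  then have "m < G t" if "t \<in> K" for t
    using that unfolding m_def by (metis INF_lower le_less)
  then have "\<exists>c U. m < ereal c \<and> open U \<and> t \<in> U \<and> (\<forall>y\<in>U. ereal c < G y)" if "t \<in> K" for t
    using that G ereal_dense2 unfolding eventually_nhds by meson
  then obtain c U where cU: "\<And>t. t \<in> K \<Longrightarrow> m < ereal (c t) \<and> open (U t) \<and> t \<in> U t \<and> (\<forall>y\<in>U t. ereal (c t) < G y)"
    by metis
  obtain T where T: "T \<subseteq> K" "finite T" "K \<subseteq> (\<Union>t\<in>T. U t)"
    using compactE_image[OF K(1), of K U] cU by blast
  have "T \<noteq> {}" using T K(2) by auto
  then have "Min (c ` T) \<in> c ` T" using T(2) by simp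
  then have "m < ereal (Min (c ` T))" using cU T(1) by auto
  also have "ereal (Min (c ` T)) \<le> m"
    unfolding m_def
  proof (rule INF_greatest)
    fix y assume "y \<in> K"
    then obtain t where "t \<in> T" "y \<in> U t" using T(3) by blast
    then show "ereal (Min (c ` T)) \<le> G y"
      using cU[of t] T by (meson Min_le ereal_less_eq(3) finite_imageI image_eqI less_imp_le order_trans subsetD)
  qed
  finally show False by simp
qed

lemma proper_fun_real:
  assumes "proper_fun phi" "phi t \<noteq> \<infinity>"
  shows "phi t = ereal (real_of_ereal (phi t))"
  using assms unfolding proper_fun_def by (cases "phi t") auto

lemma proper_funE:
  assumes "proper_fun phi"
  obtains t p where "phi t = ereal p"
  using assms proper_fun_real unfolding proper_fun_def by metis

lemma convex_efun_chord_lower_bound: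
  fixes phi :: "real \<Rightarrow> ereal"
  assumes cvx: "convex_efun phi" and l: "0 < l" "l \<le> 1"
    and t0: "phi t0 = ereal p" and u: "ereal c < phi ((1 - l) * t0 + l * t)"
  shows "ereal (p - (p - c) / l) \<le> phi t"
proof -
  have chord: "phi ((1 - l) * t0 + l * t) \<le> ereal (1 - l) * phi t0 + ereal l * phi t"
    using cvx l unfolding convex_efun_def by auto
  show ?thesis
  proof (cases "phi t")
    case (real s)
    then have "ereal c < ereal ((1 - l) * p + l * s)" using chord u t0 less_le_trans by fastforce
    moreover have "l * (p - (p - c) / l) = c - (1 - l) * p" using l by (simp add: field_simps)
    ultimately have "l * (p - (p - c) / l) < l * s" by simp
    then show ?thesis using l real by simp
  qed (use chord u t0 l in auto)
qed

lemma proper_convex_lsc_affine_minorant: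
  fixes phi :: "real \<Rightarrow> ereal"
  assumes proper: "proper_fun phi" and lsc: "lsc_fun phi" and cvx: "convex_efun phi"
  shows "\<exists>a k. \<forall>t. ereal (a - k * \<bar>t\<bar>) \<le> phi t"
proof -
  obtain t0 p where p: "phi t0 = ereal p" using proper_funE[OF proper] .
  obtain e where e: "e > 0" "\<And>y. dist y t0 < e \<Longrightarrow> ereal (p - 1) < phi y"
    using lsc_fun_eventually_greater[OF lsc, of "ereal (p - 1)" t0] p
    by (auto simp: eventually_nhds_metric)
  have bound: "ereal (p - 1 - 2 * \<bar>t - t0\<bar> / e) \<le> phi t" for t
  proof (cases "\<bar>t - t0\<bar> < e")
    case True
    then have "ereal (p - 1) < phi t" using e by (simp add: dist_real_def)
    moreover have "p - 1 - 2 * \<bar>t - t0\<bar> / e \<le> p - 1" using e(1) by simp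
    ultimately show ?thesis by (meson ereal_less_eq(3) less_imp_le order_trans)
  next
    case False
    define l where "l = e / (2 * \<bar>t - t0\<bar>)"
    have l: "0 < l" "l \<le> 1" using False e(1) by (auto simp: l_def field_simps)
    have "(1 - l) * t0 + l * t - t0 = l * (t - t0)" by (simp add: algebra_simps)
    then have "\<bar>(1 - l) * t0 + l * t - t0\<bar> = e / 2"
      using False e(1) by (simp add: l_def abs_mult)
    then have "ereal (p - 1) < phi ((1 - l) * t0 + l * t)" using e by (simp add: dist_real_def)
    from convex_efun_chord_lower_bound[OF cvx l p this]
    have "ereal (p - 1 / l) \<le> phi t" by simp
    moreover have "1 / l = 2 * \<bar>t - t0\<bar> / e" using False e(1) by (simp add: l_def)
    ultimately show ?thesis by (smt (verit) ereal_less_eq(3) order_trans)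
  qed
  have "ereal (p - 1 - 2 * \<bar>t0\<bar> / e - 2 / e * \<bar>t\<bar>) \<le> phi t" for t
  proof -
    have "2 * \<bar>t - t0\<bar> / e \<le> 2 * \<bar>t0\<bar> / e + 2 / e * \<bar>t\<bar>"
      using e(1) abs_triangle_ineq4[of t t0]
      by (simp add: divide_right_mono add_divide_distrib[symmetric] add.commute)
    then show ?thesis using bound[of t] by (smt (verit) ereal_less_eq(3) order_trans)
  qed
  then show ?thesis by blast
qed

lemma eventually_quadratic_dominates:
  fixes d M a P :: real
  assumes d: "0 < d"
  shows "eventually (\<lambda>u. P < d * u^2 - M * u + a) at_top"
proof -
  define c where "c = \<bar>P - a\<bar> + 1"
  have "P < d * u^2 - M * u + a" if u: "u \<ge> max 1 ((M + c) / d)" for u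
  proof -
    have "M + c \<le> d * u" using u d by (simp add: pos_divide_le_eq mult.commute)
    then have "(M + c) * u \<le> d * u * u" using u by (intro mult_right_mono) auto
    moreover have "c * 1 \<le> c * u" using u by (intro mult_left_mono) (auto simp: c_def)
    ultimately show ?thesis by (simp add: c_def power2_eq_square algebra_simps)
  qed
  then show ?thesis
    by (auto simp: eventually_at_top_linorder intro!: exI[of _ "max 1 ((M + c) / d)"])
qed

lemma quadratic_plus_convex_attains_min:
  fixes phi :: "real \<Rightarrow> ereal"
  assumes proper: "proper_fun phi" and lsc: "lsc_fun phi" and cvx: "convex_efun phi"
    and d: "0 < d"
  shows "\<exists>t. \<forall>y. ereal (d / 2 * t^2 + r * t) + phi t \<le> ereal (d / 2 * y^2 + r * y) + phi y"
proof -
  define q where "q y = d / 2 * y^2 + r * y" for y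
  obtain a k where ak: "\<And>t. ereal (a - k * \<bar>t\<bar>) \<le> phi t"
    using proper_convex_lsc_affine_minorant[OF proper lsc cvx] by blast
  obtain t0 p where p: "phi t0 = ereal p" using proper_funE[OF proper] .
  obtain R where R: "\<And>u. u \<ge> R \<Longrightarrow> q t0 + p < d / 2 * u^2 - (\<bar>r\<bar> + k) * u + a"
    using eventually_quadratic_dominates[of "d / 2" "q t0 + p" "\<bar>r\<bar> + k" a] d
    by (auto simp: eventually_at_top_linorder)
  define K where "K = {- max R \<bar>t0\<bar> .. max R \<bar>t0\<bar>}"
  have far: "ereal (q t0) + phi t0 < ereal (q y) + phi y" if "y \<notin> K" for y
  proof -
    have "- \<bar>r * y\<bar> \<le> r * y" by simp
    then have "q t0 + p < q y + (a - k * \<bar>y\<bar>)"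
      using R[of "\<bar>y\<bar>"] that by (force simp: K_def q_def abs_mult algebra_simps)
    then have "ereal (q t0) + phi t0 < ereal (q y) + ereal (a - k * \<bar>y\<bar>)" using p by simp
    also have "\<dots> \<le> ereal (q y) + phi y" using ak by (intro add_left_mono)
    finally show ?thesis .
  qed
  have "isCont q y" for y unfolding q_def by (intro continuous_intros)
  then have "\<exists>t\<in>K. \<forall>y\<in>K. ereal (q t) + phi t \<le> ereal (q y) + phi y"
    by (intro lsc_attains_min_on_compact eventually_greater_add_continuous
        lsc_fun_eventually_greater[OF lsc]) (auto simp: K_def)
  then obtain t where "t \<in> K" "\<And>y. y \<in> K \<Longrightarrow> ereal (q t) + phi t \<le> ereal (q y) + phi y"
    by blast
  moreover have "t0 \<in> K" by (auto simp: K_def)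
  ultimately have "ereal (q t) + phi t \<le> ereal (q y) + phi y" for y
    using far[of y] by (cases "y \<in> K") (auto dest: less_imp_le intro: order_trans)
  then show ?thesis unfolding q_def by blast
qed

lemma convex_efun_quadratic_min_subgradient:
  fixes phi :: "real \<Rightarrow> ereal"
  assumes cvx: "convex_efun phi" and pt: "phi t = ereal pt"
    and min: "\<And>y. ereal (d / 2 * t^2 + r * t) + phi t \<le> ereal (d / 2 * y^2 + r * y) + phi y"
  shows "phi t + ereal (- (d * t + r) * (y - t)) \<le> phi y"
proof (cases "phi y")
  case (real s)
  define q where "q y = d / 2 * y^2 + r * y" for y
  define g where "g = d * t + r"
  define \<delta> where "\<delta> = y - t"
  \<comment> \<open>Compare \<open>t\<close> with \<open>(1 - l) t + l y\<close>; the quadratic term vanishes as \<open>l \<rightarrow> 0\<close>.\<close>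
  have "pt - g * \<delta> - s \<le> l * (d / 2 * \<delta>^2)" if l: "0 < l" "l \<le> 1" for l
  proof -
    define u where "u = (1 - l) * t + l * y"
    have "phi u \<le> ereal (1 - l) * phi t + ereal l * phi y"
      using cvx l unfolding convex_efun_def u_def by auto
    then have "phi u \<le> ereal ((1 - l) * pt + l * s)" using pt real by simp
    then have "ereal (q t) + phi t \<le> ereal (q u) + ereal ((1 - l) * pt + l * s)"
      using min[of u] unfolding q_def by (meson add_left_mono order_trans)
    then have "q t + pt \<le> q u + ((1 - l) * pt + l * s)" using pt by simp
    moreover have "q u = q t + g * l * \<delta> + d / 2 * l^2 * \<delta>^2"
      unfolding q_def u_def g_def \<delta>_def by (simp add: power2_eq_square algebra_simps)
    ultimately have "l * (pt - g * \<delta> - s) \<le> l * (l * (d / 2 * \<delta>^2))"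
      by (simp add: algebra_simps power2_eq_square)
    then show ?thesis using l by simp
  qed
  then have "eventually (\<lambda>l. pt - g * \<delta> - s \<le> l * (d / 2 * \<delta>^2)) (at_right 0)"
    by (auto simp: eventually_at_right_field intro!: exI[of _ 1])
  moreover have "((\<lambda>l. l * (d / 2 * \<delta>^2)) \<longlongrightarrow> 0 * (d / 2 * \<delta>^2)) (at_right 0)"
    by (intro tendsto_intros)
  ultimately have "pt - g * \<delta> - s \<le> 0"
    by (intro tendsto_lowerbound[where F = "at_right (0::real)"]) auto
  then show ?thesis using pt real unfolding g_def \<delta>_def by (simp add: algebra_simps)
qed (use pt min[of y] in auto)

lemma prox_exists:
  fixes phi :: "real \<Rightarrow> ereal"
  assumes proper: "proper_fun phi" and lsc: "lsc_fun phi" and cvx: "convex_efun phi"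
    and d: "0 < d"
  shows "\<exists>t. phi t \<noteq> \<infinity> \<and> (\<forall>y. phi t + ereal (- (d * t + r) * (y - t)) \<le> phi y)"
proof -
  obtain t where min: "\<And>y. ereal (d / 2 * t^2 + r * t) + phi t \<le> ereal (d / 2 * y^2 + r * y) + phi y"
    using quadratic_plus_convex_attains_min[OF proper lsc cvx d] by blast
  obtain t0 p where "phi t0 = ereal p" using proper_funE[OF proper] .
  then have "phi t \<noteq> \<infinity>" using min[of t0] by auto
  moreover obtain pt where "phi t = ereal pt" using proper_fun_real[OF proper calculation] by blast
  ultimately show ?thesis using convex_efun_quadratic_min_subgradient[OF cvx _ min] by blast
qed

lemma sep_fun_finite:
  assumes proper: "proper_fun phi" and fin: "sep_fun phi z \<noteq> \<infinity>"
  shows "sep_fun phi z = ereal (\<Sum>i\<in>UNIV. real_of_ereal (phi (z$i)))"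
proof -
  have "phi (z$i) \<noteq> \<infinity>" for i using fin unfolding sep_fun_def by (auto simp: sum_Pinfty)
  then have "phi (z$i) = ereal (real_of_ereal (phi (z$i)))" for i
    using proper_fun_real[OF proper] by blast
  then have "sep_fun phi z = (\<Sum>i\<in>UNIV. ereal (real_of_ereal (phi (z$i))))"
    unfolding sep_fun_def by (intro sum.cong) auto
  then show ?thesis by simp
qed

lemma sep_fun_neq_minf:
  assumes "proper_fun phi"
  shows "sep_fun phi z \<noteq> -\<infinity>"
  using sep_fun_finite[OF assms, of z] by (cases "sep_fun phi z = \<infinity>") auto

lemma subdiff_sep_funI:
  assumes proper: "proper_fun phi"
    and sub: "\<And>i. phi (z$i) \<noteq> \<infinity> \<and> (\<forall>y. phi (z$i) + ereal (v$i * (y - z$i)) \<le> phi y)"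
  shows "v \<in> subdiff (sep_fun phi) z"
proof -
  define pz where "pz i = real_of_ereal (phi (z$i))" for i
  have pz: "phi (z$i) = ereal (pz i)" for i
    using proper_fun_real[OF proper] sub unfolding pz_def by blast
  have sz: "sep_fun phi z = ereal (\<Sum>i\<in>UNIV. pz i)" unfolding sep_fun_def pz by simp
  have "sep_fun phi z + ereal (v \<bullet> (y - z)) \<le> sep_fun phi y" for y
  proof -
    have "sep_fun phi z + ereal (v \<bullet> (y - z)) = (\<Sum>i\<in>UNIV. ereal (pz i + v$i * (y$i - z$i)))"
      unfolding sz inner_vec_def by (simp add: sum.distrib)
    also have "\<dots> \<le> (\<Sum>i\<in>UNIV. phi (y$i))"
    proof (intro sum_mono)
      fix i
      have "ereal (pz i + v$i * (y$i - z$i)) = phi (z$i) + ereal (v$i * (y$i - z$i))"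
        by (simp add: pz)
      also have "\<dots> \<le> phi (y$i)" using sub by blast
      finally show "ereal (pz i + v$i * (y$i - z$i)) \<le> phi (y$i)" .
    qed
    finally show ?thesis unfolding sep_fun_def .
  qed
  then show ?thesis unfolding subdiff_def sz by simp
qed

lemma subdiff_monotone:
  fixes g :: "'a::real_inner \<Rightarrow> ereal"
  assumes "\<And>x. g x \<noteq> -\<infinity>" "v \<in> subdiff g z" "w \<in> subdiff g y"
  shows "0 \<le> (v - w) \<bullet> (z - y)"
proof -
  have "g z \<noteq> \<infinity>" "g y \<noteq> \<infinity>" using assms(2,3) by (auto simp: subdiff_def)
  then obtain gz gy where "g z = ereal gz" "g y = ereal gy"
    using assms(1)[of z] assms(1)[of y] by (cases "g z"; cases "g y") auto
  moreover have "g z + ereal (v \<bullet> (y - z)) \<le> g y" "g y + ereal (w \<bullet> (z - y)) \<le> g z"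
    using assms(2,3) unfolding subdiff_def by auto
  ultimately have "v \<bullet> (y - z) + w \<bullet> (z - y) \<le> 0" by simp
  then show ?thesis by (simp add: inner_diff_left inner_diff_right)
qed

lemma Bmat_mult_vec_nth:
  "(Bmat A \<omega> \<theta> *v z) $ i = (\<Sum>j\<in>{j. j < i}. A$i$j * z$j) + (A$i$i + \<theta>) / \<omega> * z$i"
proof -
  have "Bmat A \<omega> \<theta> $ i $ j = (if j < i then A$i$j else 0) + (if j = i then (A$i$i + \<theta>) / \<omega> else 0)" for j
    unfolding Bmat_def strict_lower_def diag_part_def by (auto simp: mat_def add_divide_distrib)
  then have "(Bmat A \<omega> \<theta> *v z) $ i
      = (\<Sum>j\<in>UNIV. (if j < i then A$i$j * z$j else 0) + (if j = i then (A$i$i + \<theta>) / \<omega> * z$i else 0))"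
    unfolding matrix_vector_mult_def vec_lambda_beta by (intro sum.cong) (auto simp: distrib_right)
  then show ?thesis by (simp add: sum.distrib sum.If_cases)
qed

lemma Bmat_plus_Cmat:
  assumes symA: "transpose A = A" and \<omega>: "\<omega> \<noteq> 0"
  shows "Bmat A \<omega> \<theta> + Cmat A \<omega> \<theta> = A"
proof -
  have "(Bmat A \<omega> \<theta> + Cmat A \<omega> \<theta>) $ i $ j = A $ i $ j" for i j
  proof -
    have entry: "(Bmat A \<omega> \<theta> + Cmat A \<omega> \<theta>) $ i $ j =
      (if j < i then A$i$j else 0) + (if i < j then A$j$i else 0)
      + (1/\<omega>) * ((if i = j then A$i$j else 0) + \<theta> * (if i = j then 1 else 0))
      + (1/\<omega>) * ((\<omega> - 1) * (if i = j then A$i$j else 0) - \<theta> * (if i = j then 1 else 0))"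
      unfolding Bmat_def Cmat_def strict_lower_def diag_part_def transpose_def mat_def
      by (simp only: vector_add_component vector_scaleR_component vector_minus_component
          vec_lambda_beta real_scaleR_def)
    have "A $ j $ i = A $ i $ j" using symA by (metis transpose_def vec_lambda_beta)
    moreover have "(1/\<omega>) * (a + \<theta>) + (1/\<omega>) * ((\<omega> - 1) * a - \<theta>) = a" for a
      using \<omega> by (simp add: field_simps)
    ultimately show ?thesis unfolding entry by (cases i j rule: linorder_cases) auto
  qed
  then show ?thesis by (simp add: vec_eq_iff)
qed

lemma quadratic_form_strict_lower_split:
  fixes A :: "real^('n::{finite,linorder})^'n::{finite,linorder}"
  assumes symA: "transpose A = A"
  shows "w \<bullet> (A *v w) = 2 * (\<Sum>i\<in>UNIV. \<Sum>j\<in>{j. j < i}. w$i * A$i$j * w$j) + (\<Sum>i\<in>UNIV. A$i$i * (w$i)^2)"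
proof -
  define f where "f i j = w$i * A$i$j * w$j" for i j
  have split: "(\<Sum>j\<in>UNIV. f i j) = (\<Sum>j\<in>{j. j < i}. f i j) + f i i + (\<Sum>j\<in>{j. i < j}. f i j)" for i
  proof -
    have "(\<Sum>j\<in>UNIV. f i j)
        = (\<Sum>j\<in>UNIV. (if j < i then f i j else 0) + (if j = i then f i j else 0) + (if i < j then f i j else 0))"
      by (intro sum.cong) auto
    then show ?thesis by (simp add: sum.distrib sum.If_cases)
  qed
  have "f j i = f i j" for i j
    using symA unfolding f_def transpose_def by (metis mult.commute mult.left_commute vec_lambda_beta)
  then have swap: "(\<Sum>i\<in>UNIV. \<Sum>j\<in>{j. i < j}. f i j) = (\<Sum>i\<in>UNIV. \<Sum>j\<in>{j. j < i}. f i j)"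
    using sum.swap_restrict[of UNIV UNIV f "\<lambda>i j. i < j"] by simp
  have "w \<bullet> (A *v w) = (\<Sum>i\<in>UNIV. \<Sum>j\<in>UNIV. f i j)"
    unfolding inner_vec_def matrix_vector_mult_def f_def by (simp add: sum_distrib_left mult.assoc)
  also have "\<dots> = (\<Sum>i\<in>UNIV. \<Sum>j\<in>{j. j < i}. f i j) + (\<Sum>i\<in>UNIV. f i i) + (\<Sum>i\<in>UNIV. \<Sum>j\<in>{j. i < j}. f i j)"
    unfolding split by (simp add: sum.distrib)
  finally show ?thesis unfolding swap by (simp add: f_def power2_eq_square ac_simps)
qed

lemma Bmat_quadratic_form:
  "w \<bullet> (Bmat A \<omega> \<theta> *v w)
     = (\<Sum>i\<in>UNIV. \<Sum>j\<in>{j. j < i}. w$i * A$i$j * w$j) + (\<Sum>i\<in>UNIV. (A$i$i + \<theta>) / \<omega> * (w$i)^2)"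
  unfolding inner_vec_def Bmat_mult_vec_nth
  by (simp add: sum.distrib sum_distrib_left power2_eq_square algebra_simps)

lemma Bmat_positive_definite:
  assumes symA: "transpose A = A" and psdA: "\<forall>v. 0 \<le> v \<bullet> (A *v v)"
    and \<omega>: "0 < \<omega>" "\<omega> < 2" and \<theta>: "0 \<le> \<theta>" "\<forall>i. 0 < A $ i $ i + \<theta>"
    and w: "w \<noteq> 0"
  shows "0 < w \<bullet> (Bmat A \<omega> \<theta> *v w)"
proof -
  \<comment> \<open>\<open>w\<^sup>TBw - w\<^sup>TAw/2 = \<Sum>\<^sub>i c\<^sub>i w\<^sub>i\<^sup>2\<close>, and \<open>\<omega> < 2\<close> makes every \<open>c\<^sub>i\<close> positive.\<close>
  define c where "c i = (A$i$i + \<theta>) / \<omega> - A$i$i / 2" for i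
  have c: "0 < c i" for i
  proof -
    have "(A$i$i + \<theta>) / 2 < (A$i$i + \<theta>) / \<omega>" using \<omega> \<theta>(2) by (intro divide_strict_left_mono) auto
    then show ?thesis using \<theta>(1) by (simp add: c_def)
  qed
  obtain k where k: "w$k \<noteq> 0" using w by (metis vec_eq_iff zero_index)
  have "0 < c k * (w$k)^2" using c[of k] k by simp
  also have "\<dots> \<le> (\<Sum>i\<in>UNIV. c i * (w$i)^2)"
  proof (rule member_le_sum)
    fix i show "0 \<le> c i * (w$i)^2" using c[of i] by simp
  qed auto
  also have "\<dots> = (\<Sum>i\<in>UNIV. (A$i$i + \<theta>) / \<omega> * (w$i)^2) - (\<Sum>i\<in>UNIV. A$i$i * (w$i)^2) / 2"
    unfolding c_def by (simp add: sum_subtractf sum_divide_distrib algebra_simps)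
  finally show ?thesis
    using Bmat_quadratic_form[of w A \<omega> \<theta>] quadratic_form_strict_lower_split[OF symA, of w]
      psdA[rule_format, of w] by linarith
qed

lemma lower_triangular_solvable:
  fixes G :: "'a^'n::{finite,linorder} \<Rightarrow> 'n \<Rightarrow> bool"
  assumes local: "\<And>z z' i. (\<And>j. j \<le> i \<Longrightarrow> z'$j = z$j) \<Longrightarrow> G z' i \<longleftrightarrow> G z i"
    and solvable: "\<And>z i. \<exists>z'. (\<forall>j<i. z'$j = z$j) \<and> G z' i"
  shows "\<exists>z. \<forall>i. G z i"
proof -
  have "\<exists>z. \<forall>i\<in>S. G z i" for S :: "'n set"
    using finite[of S]
  proof (induction S rule: finite_linorder_max_induct)
    case (insert b S)
    then obtain z where z: "\<forall>i\<in>S. G z i" by blast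
    obtain z' where z': "\<forall>j<b. z'$j = z$j" "G z' b" using solvable by blast
    have "G z' i" if "i \<in> S" for i
      using local[of i z' z] z' z that insert.hyps(2) by fastforce
    then show ?case using z' by blast
  qed simp
  then show ?thesis by blast
qed

lemma psd_quadratic_first_order:
  fixes A :: "real^'n^'n"
  assumes symA: "transpose A = A" and psdA: "\<forall>v. 0 \<le> v \<bullet> (A *v v)"
  shows "(1/2) * (x \<bullet> (A *v x)) + x \<bullet> b
           \<le> (1/2) * (y \<bullet> (A *v y)) + y \<bullet> b + (- (A *v x + b)) \<bullet> (y - x)"
proof -
  have "x \<bullet> (A *v y) = (transpose A *v x) \<bullet> y" by (simp flip: dot_lmul_matrix)
  then have "x \<bullet> (A *v y) = y \<bullet> (A *v x)" using symA by (simp add: inner_commute)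
  then have "(y - x) \<bullet> (A *v (y - x)) = y \<bullet> (A *v y) - 2 * (y \<bullet> (A *v x)) + x \<bullet> (A *v x)"
    by (simp add: matrix_vector_mult_diff_distrib inner_diff_left inner_diff_right)
  moreover have "(- (A *v x + b)) \<bullet> (y - x) = - (y \<bullet> (A *v x)) + x \<bullet> (A *v x) - y \<bullet> b + x \<bullet> b"
    by (simp add: inner_diff_right inner_add_left inner_commute)
  ultimately show ?thesis using psdA[rule_format, of "y - x"] by simp
qed

lemma is_minimizer_qobjI:
  assumes symA: "transpose A = A" and psdA: "\<forall>v. 0 \<le> v \<bullet> (A *v v)"
    and proper: "proper_fun phi" and sub: "- (A *v x + b) \<in> subdiff (sep_fun phi) x"
  shows "is_minimizer (qobj A b phi) x"
  unfolding is_minimizer_def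
proof
  fix y
  define Q where "Q z = (1/2) * (z \<bullet> (A *v z)) + z \<bullet> b" for z
  obtain H where H: "sep_fun phi x = ereal H"
    using sub sep_fun_finite[OF proper] unfolding subdiff_def by blast
  have "qobj A b phi x = ereal (Q x + H)" unfolding qobj_def Q_def H by simp
  also have "\<dots> \<le> ereal (Q y) + ereal (H + (- (A *v x + b)) \<bullet> (y - x))"
    using psd_quadratic_first_order[OF symA psdA, of x b y] unfolding Q_def by simp
  also have "\<dots> \<le> ereal (Q y) + sep_fun phi y"
    using sub H unfolding subdiff_def by (intro add_left_mono) auto
  also have "\<dots> = qobj A b phi y" unfolding qobj_def Q_def ..
  finally show "qobj A b phi x \<le> qobj A b phi y" .
qed

lemma Top_equation_solvable:
  fixes A :: "real^('n::{finite,linorder})^'n::{finite,linorder}"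
  assumes proper: "proper_fun phi" and lsc: "lsc_fun phi" and cvx: "convex_efun phi"
    and \<omega>: "0 < \<omega>" and diag: "\<forall>i. 0 < A $ i $ i + \<theta>"
  shows "\<exists>z. - (Bmat A \<omega> \<theta> *v z + b + Cmat A \<omega> \<theta> *v x) \<in> subdiff (sep_fun phi) z"
proof -
  define c where "c = b + Cmat A \<omega> \<theta> *v x"
  define v where "v z = - (Bmat A \<omega> \<theta> *v z + c)" for z
  have v: "v z $ i = - ((A$i$i + \<theta>) / \<omega> * z$i + ((\<Sum>j\<in>{j. j < i}. A$i$j * z$j) + c$i))" for z i
    unfolding v_def by (simp add: Bmat_mult_vec_nth)
  define G where "G z i \<longleftrightarrow> phi (z$i) \<noteq> \<infinity> \<and> (\<forall>y. phi (z$i) + ereal (v z $ i * (y - z$i)) \<le> phi y)"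
    for z i
  have "\<exists>z. \<forall>i. G z i"
  proof (rule lower_triangular_solvable)
    fix z z' :: "real^'n::{finite,linorder}" and i
    assume agree: "\<And>j. j \<le> i \<Longrightarrow> z'$j = z$j"
    then have "(\<Sum>j\<in>{j. j < i}. A$i$j * z'$j) = (\<Sum>j\<in>{j. j < i}. A$i$j * z$j)"
      by (intro sum.cong) auto
    then show "G z' i \<longleftrightarrow> G z i" unfolding G_def v using agree by simp
  next
    fix z :: "real^'n::{finite,linorder}" and i
    obtain t where t: "phi t \<noteq> \<infinity>"
      "\<And>y. phi t + ereal (- ((A$i$i + \<theta>) / \<omega> * t + ((\<Sum>j\<in>{j. j < i}. A$i$j * z$j) + c$i)) * (y - t)) \<le> phi y"
      using prox_exists[OF proper lsc cvx, of "(A$i$i + \<theta>) / \<omega>" "(\<Sum>j\<in>{j. j < i}. A$i$j * z$j) + c$i"]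
        diag \<omega> by auto
    define z' where "z' = (\<chi> j. if j = i then t else z$j)"
    have "(\<Sum>j\<in>{j. j < i}. A$i$j * z'$j) = (\<Sum>j\<in>{j. j < i}. A$i$j * z$j)"
      unfolding z'_def by (intro sum.cong) auto
    then have "G z' i" using t unfolding G_def v by (simp add: z'_def)
    moreover have "\<forall>j<i. z'$j = z$j" unfolding z'_def by simp
    ultimately show "\<exists>z'. (\<forall>j<i. z'$j = z$j) \<and> G z' i" by blast
  qed
  then obtain z where "\<And>i. G z i" by blast
  then have "v z \<in> subdiff (sep_fun phi) z" unfolding G_def by (intro subdiff_sep_funI[OF proper]) auto
  then show ?thesis unfolding v_def c_def by (auto simp: add.assoc)
qed

lemma Top_equation_unique:
  assumes symA: "transpose A = A" and psdA: "\<forall>v. 0 \<le> v \<bullet> (A *v v)" and proper: "proper_fun phi"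
    and \<omega>: "0 < \<omega>" "\<omega> < 2" and \<theta>: "0 \<le> \<theta>" "\<forall>i. 0 < A $ i $ i + \<theta>"
    and z1: "- (Bmat A \<omega> \<theta> *v z1 + b + Cmat A \<omega> \<theta> *v x) \<in> subdiff (sep_fun phi) z1"
    and z2: "- (Bmat A \<omega> \<theta> *v z2 + b + Cmat A \<omega> \<theta> *v x) \<in> subdiff (sep_fun phi) z2"
  shows "z1 = z2"
proof (rule ccontr)
  assume "z1 \<noteq> z2"
  then have "0 < (z1 - z2) \<bullet> (Bmat A \<omega> \<theta> *v (z1 - z2))"
    using Bmat_positive_definite[OF symA psdA \<omega> \<theta>] by simp
  moreover have "0 \<le> (- (Bmat A \<omega> \<theta> *v (z1 - z2))) \<bullet> (z1 - z2)"
    using subdiff_monotone[OF sep_fun_neq_minf[OF proper] z1 z2]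
    by (simp add: matrix_vector_mult_diff_distrib algebra_simps)
  ultimately show False by (simp add: inner_commute)
qed

lemma Top_spec:
  assumes symA: "transpose A = A" and psdA: "\<forall>v. 0 \<le> v \<bullet> (A *v v)"
    and proper: "proper_fun phi" and lsc: "lsc_fun phi" and cvx: "convex_efun phi"
    and \<omega>: "0 < \<omega>" "\<omega> < 2" and \<theta>: "0 \<le> \<theta>" "\<forall>i. 0 < A $ i $ i + \<theta>"
  shows "- (Bmat A \<omega> \<theta> *v Top A b phi \<omega> \<theta> x + b + Cmat A \<omega> \<theta> *v x)
           \<in> subdiff (sep_fun phi) (Top A b phi \<omega> \<theta> x)"
  unfolding Top_def
proof (rule theI'[OF ex_ex1I])
  show "\<exists>z. - (Bmat A \<omega> \<theta> *v z + b + Cmat A \<omega> \<theta> *v x) \<in> subdiff (sep_fun phi) z"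
    using Top_equation_solvable[OF proper lsc cvx \<omega>(1) \<theta>(2)] .
qed (rule Top_equation_unique[OF symA psdA proper \<omega> \<theta>])

lemma Top_fixed_point_is_minimizer:
  assumes symA: "transpose A = A" and psdA: "\<forall>v. 0 \<le> v \<bullet> (A *v v)"
    and proper: "proper_fun phi" and lsc: "lsc_fun phi" and cvx: "convex_efun phi"
    and \<omega>: "0 < \<omega>" "\<omega> < 2" and \<theta>: "0 \<le> \<theta>" "\<forall>i. 0 < A $ i $ i + \<theta>"
    and fixed: "Top A b phi \<omega> \<theta> x = x"
  shows "is_minimizer (qobj A b phi) x"
proof (rule is_minimizer_qobjI[OF symA psdA proper])
  have "Bmat A \<omega> \<theta> *v x + b + Cmat A \<omega> \<theta> *v x = A *v x + b"
    using Bmat_plus_Cmat[OF symA, of \<omega> \<theta>] \<omega>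
    by (simp add: matrix_vector_mult_add_rdistrib[symmetric] algebra_simps)
  with Top_spec[OF symA psdA proper lsc cvx \<omega> \<theta>, of b x]
  show "- (A *v x + b) \<in> subdiff (sep_fun phi) x" unfolding fixed by simp
qed

theorem lemma2:
  fixes A :: "real^('n::{finite,linorder})^'n::{finite,linorder}" and b :: "real^'n::{finite,linorder}" and phi :: "real \<Rightarrow> ereal"
    and xstar x :: "real^'n::{finite,linorder}" and \<omega> \<theta> :: real
  assumes symA: "transpose A = A"
    and psdA: "\<forall>v. 0 \<le> v \<bullet> (A *v v)"
    and proper: "proper_fun phi" and lsc: "lsc_fun phi" and cvx: "convex_efun phi"
    and xstar_min: "is_minimizer (qobj A b phi) xstar"
    and omega: "0 < \<omega>" "\<omega> < 2"
    and theta: "0 \<le> \<theta>" "\<forall>i. 0 < A $ i $ i + \<theta>"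
    and notmin: "\<not> is_minimizer (qobj A b phi) x"
  shows "\<exists>\<eta>::real. 0 < \<eta> \<and> norm (x - xstar) \<le> \<eta> * norm (x - Top A b phi \<omega> \<theta> x)"
proof -
  let ?r = "norm (x - Top A b phi \<omega> \<theta> x)"
  have "Top A b phi \<omega> \<theta> x \<noteq> x"
    using Top_fixed_point_is_minimizer[OF symA psdA proper lsc cvx omega theta] notmin by blast
  then have "0 < ?r" by simp
  then have "norm (x - xstar) \<le> (norm (x - xstar) / ?r + 1) * ?r"
    by (simp add: distrib_right)
  moreover have "0 < norm (x - xstar) / ?r + 1" using \<open>0 < ?r\<close> by (simp add: add_nonneg_pos)
  ultimately show ?thesis by blast
qed

end
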